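(* Let $p>q\ge2$, $V(x)=\frac{|x|^p}{p}-\frac{|x|^q}{q}$ on ${\mathbb R}$, $E(\rho)=\frac12\iint V(x-y)\,d\rho(x)\,d\rho(y)$, and $1\le\lambda<\infty$. Let $r=\big(\frac{q-1}{p-1}\big)^{\frac{1}{p-q}}$, $R=\big(\frac pq\big)^{\frac1{p-q}}$ and $l=R-r$, and suppose $l<r$. Let $\rho$ be a $d_\lambda$-local minimizer of $E$ with $\inf(\operatorname{supp}\rho)=0$ and $\operatorname{supp}\rho\subset[0,R]$. Then $\operatorname{supp}\rho\cap(l,r)=\emptyset$.
   Context: $r$ is the unique positive inflection point of $t\mapsto \frac{t^p}{p}-\frac{t^q}{q}$ on $(0,\infty)$ and $R$ its unique positive zero. $d_\lambda$ is the $\lambda$-Wasserstein distance on the set $\mathcal P_\lambda({\mathbb R})$ of probability measures with finite $\lambda$-th moment; $\rho$ is a $d_\lambda$-local minimizer if there is $\eta>0$ with $E(\rho)\le E(\rho')$ whenever $d_\lambda(\rho,\rho')\le\eta$. *)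

theory Defs
  imports "HOL-Probability.Probability"
begin

definition Vpot :: "real \<Rightarrow> real \<Rightarrow> real \<Rightarrow> real" where
  "Vpot p q x = \<bar>x\<bar> powr p / p - \<bar>x\<bar> powr q / q"

definition P_lambda :: "real \<Rightarrow> real measure set" where
  "P_lambda lam = {\<mu>. prob_space \<mu> \<and> sets \<mu> = sets (borel :: real measure)
      \<and> integrable \<mu> (\<lambda>x. \<bar>x\<bar> powr lam)}"

definition couplings :: "real measure \<Rightarrow> real measure \<Rightarrow> (real \<times> real) measure set" where
  "couplings \<mu> \<nu> = {\<pi>. prob_space \<pi>
      \<and> sets \<pi> = sets (borel \<Otimes>\<^sub>M borel :: (real \<times> real) measure)
      \<and> distr \<pi> borel fst = \<mu> \<and> distr \<pi> borel snd = \<nu>}"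

definition wasserstein :: "real \<Rightarrow> real measure \<Rightarrow> real measure \<Rightarrow> real" where
  "wasserstein lam \<mu> \<nu> =
     enn2real (INF \<pi>\<in>couplings \<mu> \<nu>. \<integral>\<^sup>+ z. ennreal (\<bar>fst z - snd z\<bar> powr lam) \<partial>\<pi>) powr (1 / lam)"

text \<open>Interaction energy E(rho) = 1/2 double integral of V(x-y), valued in
  (-infinity, +infinity] (positive part minus negative part).\<close>
definition energy :: "real \<Rightarrow> real \<Rightarrow> real measure \<Rightarrow> ereal" where
  "energy p q \<rho> = ereal (1/2) *
     (enn2ereal (\<integral>\<^sup>+ z. ennreal (Vpot p q (fst z - snd z)) \<partial>(\<rho> \<Otimes>\<^sub>M \<rho>))
      - enn2ereal (\<integral>\<^sup>+ z. ennreal (- Vpot p q (fst z - snd z)) \<partial>(\<rho> \<Otimes>\<^sub>M \<rho>)))"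

definition msupp :: "real measure \<Rightarrow> real set" where
  "msupp \<rho> = {x. \<forall>e>0. emeasure \<rho> (ball x e) > 0}"

definition local_minimizer :: "real \<Rightarrow> real \<Rightarrow> real \<Rightarrow> real measure \<Rightarrow> bool" where
  "local_minimizer p q lam \<rho> \<longleftrightarrow> \<rho> \<in> P_lambda lam \<and>
     (\<exists>\<eta>>0. \<forall>\<rho>'\<in>P_lambda lam. wasserstein lam \<rho> \<rho>' \<le> \<eta> \<longrightarrow> energy p q \<rho> \<le> energy p q \<rho>')"

end

theory Submission
  imports Defs
begin

(* Suppose x0 lies in supp rho and l < x0 < r. The profile t^p/p - t^q/q of V is strictly
   concave on [0, r], r being its inflection point, and V is even, so V is strictly midpoint
   concave on (-r, r). For x near x0 and y in [0, R] we have |x - y| < r, because x0 < r and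
   R - x0 < R - l = r. Split the mass of rho near x0 into two halves displaced by h and -h: this
   moves rho by at most h in d_lambda, and by midpoint concavity it strictly lowers every
   interaction involving displaced mass while leaving the others unchanged. So the energy drops
   strictly, contradicting local minimality. *)

lemma midpoint_strict_concave:
  fixes f f' :: "real \<Rightarrow> real"
  assumes "a < b" and cont: "continuous_on {a..b} f"
    and deriv: "\<And>x. a < x \<Longrightarrow> x < b \<Longrightarrow> (f has_real_derivative f' x) (at x)"
    and decreasing: "\<And>x y. a < x \<Longrightarrow> x < y \<Longrightarrow> y < b \<Longrightarrow> f' y < f' x"
  shows "f a + f b < 2 * f ((a + b) / 2)"
proof -
  have mvt: "\<exists>z. u < z \<and> z < v \<and> f v - f u = (v - u) * f' z"
    if "a \<le> u" "u < v" "v \<le> b" for u v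
  proof -
    have "continuous_on {u..v} f" using cont continuous_on_subset that by fastforce
    moreover have "f differentiable (at x)" if "u < x" "x < v" for x
      unfolding real_differentiable_def using deriv[of x] that \<open>a \<le> u\<close> \<open>v \<le> b\<close> by force
    ultimately obtain l z where z: "u < z" "z < v" "(f has_real_derivative l) (at z)"
      "f v - f u = (v - u) * l"
      using MVT[OF \<open>u < v\<close>] by blast
    have "l = f' z" using DERIV_unique[OF z(3) deriv] z that by simp
    with z show ?thesis by blast
  qed
  define m where "m = (a + b) / 2"
  have m: "a < m" "m < b" "m - a = b - m" using \<open>a < b\<close> by (simp_all add: m_def field_simps)
  obtain z1 where z1: "a < z1" "z1 < m" "f m - f a = (m - a) * f' z1"
    using mvt[of a m] m by auto
  obtain z2 where z2: "m < z2" "z2 < b" "f b - f m = (b - m) * f' z2"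
    using mvt[of m b] m by auto
  have "(b - m) * f' z2 < (m - a) * f' z1"
    unfolding \<open>m - a = b - m\<close> using decreasing[of z1 z2] z1 z2 m by simp
  with z1 z2 show ?thesis unfolding m_def by linarith
qed

definition Vprofile :: "real \<Rightarrow> real \<Rightarrow> real \<Rightarrow> real" where
  "Vprofile p q t = t powr p / p - t powr q / q"

lemma Vpot_eq_Vprofile: "Vpot p q x = Vprofile p q \<bar>x\<bar>"
  by (simp add: Vpot_def Vprofile_def)

lemma Vpot_minus [simp]: "Vpot p q (- x) = Vpot p q x"
  by (simp add: Vpot_def)

locale power_potential =
  fixes p q r :: real
  assumes one_less_q: "1 < q" and q_less_p: "q < p"
    and r_def: "r = ((q - 1) / (p - 1)) powr (1 / (p - q))"
begin

lemma powr_less_inflection: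
  assumes "0 \<le> t" "t < r"
  shows "t powr (p - q) < (q - 1) / (p - 1)"
proof -
  have "r powr (p - q) = (q - 1) / (p - 1)"
    using one_less_q q_less_p r_def by (simp add: powr_powr)
  with assms q_less_p show ?thesis using powr_less_mono2[of "p - q" t r] by simp
qed

lemma Vprofile_deriv:
  assumes "0 < t"
  shows "(Vprofile p q has_real_derivative t powr (p - 1) - t powr (q - 1)) (at t)"
proof -
  have "((\<lambda>t. t powr p / p - t powr q / q) has_real_derivative
        p * t powr (p - 1) / p - q * t powr (q - 1) / q) (at t)"
    using assms by (auto intro!: derivative_eq_intros)
  then show ?thesis
    using one_less_q q_less_p unfolding Vprofile_def[abs_def] by simp
qed

lemma Vprofile_deriv_strict_decreasing:
  assumes "0 < s" "s < t" "t < r"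
  shows "t powr (p - 1) - t powr (q - 1) < s powr (p - 1) - s powr (q - 1)"
proof (rule DERIV_neg_imp_decreasing[OF \<open>s < t\<close>])
  fix x assume x: "s \<le> x" "x \<le> t"
  have "((\<lambda>t. t powr (p - 1) - t powr (q - 1)) has_real_derivative
          (p - 1) * x powr (p - 1 - 1) - (q - 1) * x powr (q - 1 - 1)) (at x)"
    using x assms by (auto intro!: derivative_eq_intros)
  moreover have "(p - 1) * x powr (p - 2) < (q - 1) * x powr (q - 2)"
  proof -
    have "x powr (p - 2) = x powr (p - q) * x powr (q - 2)"
      using x assms by (simp add: powr_add[symmetric])
    moreover have "(p - 1) * x powr (p - q) < q - 1"
      using powr_less_inflection[of x] x assms one_less_q q_less_p
      by (simp add: pos_less_divide_eq mult.commute)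
    ultimately show ?thesis using x assms by simp
  qed
  ultimately show "\<exists>y. ((\<lambda>t. t powr (p - 1) - t powr (q - 1)) has_real_derivative y) (at x) \<and> y < 0"
    by (auto simp: algebra_simps)
qed

lemma Vprofile_continuous: "continuous_on {0..} (Vprofile p q)"
  unfolding Vprofile_def[abs_def] using one_less_q q_less_p
  by (intro continuous_intros continuous_on_powr') auto

lemma Vprofile_strict_decreasing:
  assumes "0 \<le> s" "s < t" "t < r"
  shows "Vprofile p q t < Vprofile p q s"
proof (rule DERIV_neg_imp_decreasing_open[OF \<open>s < t\<close>])
  fix x assume x: "s < x" "x < t"
  have "(q - 1) / (p - 1) < 1"
    using one_less_q q_less_p by simp
  then have "x powr (p - q) < 1"
    using powr_less_inflection[of x] x assms by simp
  then have "x powr (p - q) * x powr (q - 1) < x powr (q - 1)"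
    using x assms by simp
  then have "x powr (p - 1) - x powr (q - 1) < 0"
    using x assms by (simp add: powr_add[symmetric])
  then show "\<exists>y. (Vprofile p q has_real_derivative y) (at x) \<and> y < 0"
    using Vprofile_deriv[of x] x assms by (intro exI conjI) auto
next
  show "continuous_on {s..t} (Vprofile p q)"
    using Vprofile_continuous continuous_on_subset assms by fastforce
qed

lemma Vprofile_midpoint_strict:
  assumes "0 \<le> a" "a < b" "b < r"
  shows "Vprofile p q a + Vprofile p q b < 2 * Vprofile p q ((a + b) / 2)"
proof (rule midpoint_strict_concave[where f' = "\<lambda>t. t powr (p - 1) - t powr (q - 1)", OF \<open>a < b\<close>])
  show "continuous_on {a..b} (Vprofile p q)"
    using Vprofile_continuous continuous_on_subset assms by fastforce
qed (use assms Vprofile_deriv Vprofile_deriv_strict_decreasing in auto)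

lemma Vpot_midpoint_strict_nonneg:
  assumes "0 \<le> d" "d + k < r" "0 < k"
  shows "Vpot p q (d + k) + Vpot p q (d - k) < 2 * Vpot p q d"
proof (cases "k \<le> d")
  case True
  then show ?thesis
    using Vprofile_midpoint_strict[of "d - k" "d + k"] assms by (simp add: Vpot_eq_Vprofile)
next
  case False
  \<comment> \<open>V (d - k) = Vprofile (k - d): use concavity around k, then Vprofile k < Vprofile d.\<close>
  have "Vprofile p q (k - d) + Vprofile p q (k + d) \<le> 2 * Vprofile p q k"
  proof (cases "d = 0")
    case False
    then show ?thesis
      using Vprofile_midpoint_strict[of "k - d" "k + d"] assms \<open>\<not> k \<le> d\<close> by simp
  qed simp
  moreover have "Vprofile p q k < Vprofile p q d"
    using Vprofile_strict_decreasing[of d k] assms False by simp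
  moreover have "Vpot p q (d + k) = Vprofile p q (k + d)" "Vpot p q (d - k) = Vprofile p q (k - d)"
    using assms False by (simp_all add: Vpot_eq_Vprofile add.commute)
  ultimately show ?thesis
    using assms by (simp add: Vpot_eq_Vprofile)
qed

lemma Vpot_midpoint_strict:
  assumes "\<bar>d\<bar> + k < r" "0 < k"
  shows "Vpot p q (d + k) + Vpot p q (d - k) < 2 * Vpot p q d"
proof (cases "0 \<le> d")
  case True
  then show ?thesis using Vpot_midpoint_strict_nonneg assms by simp
next
  case False
  then have "Vpot p q (- d + k) + Vpot p q (- d - k) < 2 * Vpot p q (- d)"
    using Vpot_midpoint_strict_nonneg[of "- d" k] assms by simp
  moreover have "Vpot p q (- d + k) = Vpot p q (d - k)" "Vpot p q (- d - k) = Vpot p q (d + k)"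
    using Vpot_minus[of p q "d - k"] Vpot_minus[of p q "d + k"] by simp_all
  ultimately show ?thesis by simp
qed

end

lemma AE_in_msupp:
  assumes "sets \<rho> = sets (borel :: real measure)"
  shows "AE x in \<rho>. x \<in> msupp \<rho>"
proof -
  define F where "F = {ball x e | x e. e > 0 \<and> emeasure \<rho> (ball x e) = 0}"
  obtain F' where F': "F' \<subseteq> F" "countable F'" "\<Union>F' = \<Union>F"
    using Lindelof[of F] unfolding F_def by blast
  have "S \<in> null_sets \<rho>" if "S \<in> F'" for S
    using that F'(1) assms unfolding F_def by (auto simp: null_sets_def)
  then have "\<Union>F' \<in> null_sets \<rho>"
    using null_sets_UN'[OF F'(2), of "\<lambda>S. S"] by simp
  moreover have "{x \<in> space \<rho>. x \<notin> msupp \<rho>} \<subseteq> \<Union>F'"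
    using F'(3) unfolding msupp_def F_def by (force simp: zero_less_iff_neq_zero)
  ultimately show ?thesis
    by (rule AE_I')
qed

lemma (in finite_measure) integrable_bounded:
  fixes f :: "'a \<Rightarrow> real"
  assumes "f \<in> borel_measurable M" "\<And>x. \<bar>f x\<bar> \<le> c"
  shows "integrable M f"
  using assms by (intro integrable_const_bound[where B = c]) auto

lemma (in prob_space) abs_integral_le:
  fixes f :: "'a \<Rightarrow> real"
  assumes "f \<in> borel_measurable M" "\<And>x. \<bar>f x\<bar> \<le> c"
  shows "\<bar>\<integral>x. f x \<partial>M\<bar> \<le> c"
proof -
  have "\<bar>\<integral>x. f x \<partial>M\<bar> \<le> (\<integral>x. \<bar>f x\<bar> \<partial>M)"
    by (rule integral_abs_bound)
  also have "\<dots> \<le> c"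
    using assms by (intro integral_le_const integrable_bounded) auto
  finally show ?thesis .
qed

lemma integral_pair_prob_bounded:
  fixes f :: "'a \<times> 'b \<Rightarrow> real"
  assumes "prob_space M" "prob_space N" "f \<in> borel_measurable (M \<Otimes>\<^sub>M N)" "\<And>z. \<bar>f z\<bar> \<le> c"
  shows "(\<integral>z. f z \<partial>(M \<Otimes>\<^sub>M N)) = (\<integral>x. \<integral>y. f (x, y) \<partial>N \<partial>M)"
proof -
  interpret M: prob_space M by fact
  interpret N: prob_space N by fact
  interpret pair_prob_space M N ..
  show ?thesis
    using assms by (intro integral_fst'[symmetric] integrable_bounded) auto
qed

lemma AE_pair_interval:
  assumes "prob_space \<mu>" "sets \<mu> = sets (borel :: real measure)" "AE x in \<mu>. x \<in> {a..b}"
  shows "AE z in \<mu> \<Otimes>\<^sub>M \<mu>. fst z \<in> {a..b} \<and> snd z \<in> {a..b}"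
proof -
  interpret prob_space \<mu> by fact
  interpret pair_prob_space \<mu> \<mu> ..
  have "{z \<in> space (\<mu> \<Otimes>\<^sub>M \<mu>). fst z \<in> {a..b} \<and> snd z \<in> {a..b}} = {a..b} \<times> {a..b}"
    using assms(2) by (auto simp: space_pair_measure sets_eq_imp_space_eq)
  moreover have "{a..b} \<times> {a..b} \<in> sets (\<mu> \<Otimes>\<^sub>M \<mu>)"
    using assms(2) by simp
  ultimately show ?thesis
    using assms(3) by (intro AE_pair_measure) auto
qed

lemma energy_eq_integral:
  assumes "integrable (\<rho> \<Otimes>\<^sub>M \<rho>) (\<lambda>z. Vpot p q (fst z - snd z))"
  shows "energy p q \<rho> = ereal (1/2 * (\<integral>z. Vpot p q (fst z - snd z) \<partial>(\<rho> \<Otimes>\<^sub>M \<rho>)))"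
proof -
  define A where "A = (\<integral>\<^sup>+ z. ennreal (Vpot p q (fst z - snd z)) \<partial>(\<rho> \<Otimes>\<^sub>M \<rho>))"
  define B where "B = (\<integral>\<^sup>+ z. ennreal (- Vpot p q (fst z - snd z)) \<partial>(\<rho> \<Otimes>\<^sub>M \<rho>))"
  have "A \<noteq> \<infinity>" "B \<noteq> \<infinity>"
    using integrableD(2,3)[OF assms] unfolding A_def B_def by auto
  then have "enn2ereal A = ereal (enn2real A)" "enn2ereal B = ereal (enn2real B)"
    by (simp_all add: enn2ereal_ennreal[symmetric] less_top)
  then show ?thesis
    unfolding energy_def real_lebesgue_integral_def[OF assms] A_def[symmetric] B_def[symmetric]
    by simp
qed

text \<open>Clipping makes the potential bounded, so that its integrals against the measures below
  exist; on measures supported in an interval of length at most K it does not change the energy.\<close>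
definition Vclip :: "real \<Rightarrow> real \<Rightarrow> real \<Rightarrow> real \<Rightarrow> real" where
  "Vclip p q K d = Vpot p q (max (- K) (min K d))"

lemma Vclip_eq_Vpot: "\<bar>d\<bar> \<le> K \<Longrightarrow> Vclip p q K d = Vpot p q d"
  by (simp add: Vclip_def)

lemma abs_Vclip_le:
  assumes "0 < p" "0 < q"
  shows "\<bar>Vclip p q K d\<bar> \<le> \<bar>K\<bar> powr p / p + \<bar>K\<bar> powr q / q"
proof -
  define y where "y = max (- K) (min K d)"
  have "\<bar>y\<bar> \<le> \<bar>K\<bar>"
    unfolding y_def by linarith
  then have "\<bar>y\<bar> powr p / p \<le> \<bar>K\<bar> powr p / p" "\<bar>y\<bar> powr q / q \<le> \<bar>K\<bar> powr q / q"
    using assms by (auto intro!: divide_right_mono powr_mono2)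
  moreover have "0 \<le> \<bar>y\<bar> powr p / p" "0 \<le> \<bar>y\<bar> powr q / q"
    using assms by simp_all
  ultimately show ?thesis
    unfolding Vclip_def Vpot_def y_def[symmetric] by linarith
qed

lemma Vclip_measurable [measurable]: "Vclip p q K \<in> borel_measurable borel"
  unfolding Vclip_def Vpot_def by measurable

lemma energy_eq_Vclip_integral:
  assumes "prob_space \<mu>" "sets \<mu> = sets (borel :: real measure)" "AE x in \<mu>. x \<in> {a..b}"
    and "b - a \<le> K" "0 < p" "0 < q"
  shows "energy p q \<mu> = ereal (1/2 * (\<integral>z. Vclip p q K (fst z - snd z) \<partial>(\<mu> \<Otimes>\<^sub>M \<mu>)))"
proof -
  interpret prob_space \<mu> by fact
  interpret pair_prob_space \<mu> \<mu> ..
  note [measurable_cong] = sets_pair_measure_cong[OF assms(2) assms(2)]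
  have meas: "(\<lambda>z. Vpot p q (fst z - snd z)) \<in> borel_measurable (\<mu> \<Otimes>\<^sub>M \<mu>)"
    "(\<lambda>z. Vclip p q K (fst z - snd z)) \<in> borel_measurable (\<mu> \<Otimes>\<^sub>M \<mu>)"
    unfolding Vpot_def by measurable
  have ae: "AE z in \<mu> \<Otimes>\<^sub>M \<mu>. Vpot p q (fst z - snd z) = Vclip p q K (fst z - snd z)"
    using AE_pair_interval[OF assms(1-3)]
    by eventually_elim (use assms(4) in \<open>auto intro!: Vclip_eq_Vpot[symmetric]\<close>)
  have "integrable (\<mu> \<Otimes>\<^sub>M \<mu>) (\<lambda>z. Vclip p q K (fst z - snd z))"
    using meas(2) abs_Vclip_le[OF assms(5,6)] by (rule integrable_bounded)
  then have "integrable (\<mu> \<Otimes>\<^sub>M \<mu>) (\<lambda>z. Vpot p q (fst z - snd z))"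
    using integrable_cong_AE[OF meas ae] by simp
  moreover have "(\<integral>z. Vpot p q (fst z - snd z) \<partial>(\<mu> \<Otimes>\<^sub>M \<mu>)) = (\<integral>z. Vclip p q K (fst z - snd z) \<partial>(\<mu> \<Otimes>\<^sub>M \<mu>))"
    by (rule integral_cong_AE[OF meas ae])
  ultimately show ?thesis
    by (simp add: energy_eq_integral)
qed

definition coin :: "bool measure" where
  "coin = measure_pmf (bernoulli_pmf (1/2))"

lemma prob_space_coin [simp]: "prob_space coin"
  by (simp add: coin_def prob_space_measure_pmf)

lemma integral_coin: "(\<integral>s. f s \<partial>coin) = (\<Sum>s\<in>UNIV. f s) / (2 :: real)"
  by (simp add: coin_def UNIV_bool)

text \<open>The competitor: the mass of \<rho> on B is split into two halves, moved by h and by -h.\<close>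
definition split_shift :: "real \<Rightarrow> real set \<Rightarrow> bool \<Rightarrow> real \<Rightarrow> real" where
  "split_shift h B s x = x + (if s then h else - h) * indicator B x"

definition split_measure :: "real measure \<Rightarrow> real \<Rightarrow> real set \<Rightarrow> real measure" where
  "split_measure \<rho> h B = distr (\<rho> \<Otimes>\<^sub>M coin) borel (\<lambda>z. split_shift h B (snd z) (fst z))"

lemma abs_split_shift_diff_le: "\<bar>split_shift h B s x - x\<bar> \<le> \<bar>h\<bar>"
  by (simp add: split_shift_def indicator_def)

lemma sets_split_measure [simp]: "sets (split_measure \<rho> h B) = sets borel"
  by (simp add: split_measure_def)

lemma split_shift_measurable [measurable]:
  assumes [measurable]: "B \<in> sets borel"
  shows "split_shift h B s \<in> borel_measurable borel"
    and "(\<lambda>z. split_shift h B (snd z) (fst z)) \<in> borel \<Otimes>\<^sub>M count_space UNIV \<rightarrow>\<^sub>M borel"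
  unfolding split_shift_def by measurable

lemma split_shift_measurable_pair:
  assumes "sets \<rho> = sets borel" "B \<in> sets borel"
  shows "(\<lambda>z. split_shift h B (snd z) (fst z)) \<in> \<rho> \<Otimes>\<^sub>M coin \<rightarrow>\<^sub>M borel"
proof -
  have "sets (\<rho> \<Otimes>\<^sub>M coin) = sets (borel \<Otimes>\<^sub>M count_space UNIV)"
    using assms(1) unfolding coin_def by (intro sets_pair_measure_cong) auto
  then show ?thesis
    using split_shift_measurable(2)[OF assms(2)] by (simp cong: measurable_cong_sets)
qed

lemma prob_space_split_measure:
  assumes "prob_space \<rho>" "sets \<rho> = sets borel" "B \<in> sets borel"
  shows "prob_space (split_measure \<rho> h B)"
  unfolding split_measure_def using split_shift_measurable_pair[OF assms(2,3)]
  by (rule prob_space.prob_space_distr[OF prob_space_pair[OF assms(1) prob_space_coin]])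

lemma AE_split_measure_interval:
  assumes "prob_space \<rho>" "sets \<rho> = sets borel" "B \<in> sets borel" "AE x in \<rho>. x \<in> {a..b}"
  shows "AE x in split_measure \<rho> h B. x \<in> {a - \<bar>h\<bar>..b + \<bar>h\<bar>}"
proof -
  have "distr (\<rho> \<Otimes>\<^sub>M coin) \<rho> fst = \<rho>"
    by (rule prob_space.distr_pair_fst[OF prob_space_coin])
  then have "AE z in \<rho> \<Otimes>\<^sub>M coin. fst z \<in> {a..b}"
    using assms(4) by (intro AE_distrD[OF measurable_fst]) (simp only:)
  then have "AE z in \<rho> \<Otimes>\<^sub>M coin. split_shift h B (snd z) (fst z) \<in> {a - \<bar>h\<bar>..b + \<bar>h\<bar>}"
  proof eventually_elim
    case (elim z)
    then show ?case
      using abs_split_shift_diff_le[of h B "snd z" "fst z"] by (auto simp: abs_le_iff)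
  qed
  then show ?thesis
    unfolding split_measure_def
    by (subst AE_distr_iff[OF split_shift_measurable_pair[OF assms(2,3)]]) auto
qed

lemma P_lambda_if_AE_interval:
  assumes "prob_space \<mu>" "sets \<mu> = sets (borel :: real measure)" "AE x in \<mu>. x \<in> {a..b}"
    and "0 \<le> lam"
  shows "\<mu> \<in> P_lambda lam"
proof -
  interpret prob_space \<mu> by fact
  have "AE x in \<mu>. norm (\<bar>x\<bar> powr lam) \<le> max \<bar>a\<bar> \<bar>b\<bar> powr lam"
    using assms(3) by eventually_elim (use assms(4) in \<open>auto intro!: powr_mono2\<close>)
  moreover have "(\<lambda>x. \<bar>x\<bar> powr lam) \<in> borel_measurable \<mu>"
    using assms(2) by (simp cong: measurable_cong_sets)
  ultimately have "integrable \<mu> (\<lambda>x. \<bar>x\<bar> powr lam)"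
    by (rule integrable_const_bound)
  then show ?thesis
    unfolding P_lambda_def using assms(1,2) by blast
qed

lemma integral_split_measure:
  fixes g :: "real \<Rightarrow> real"
  assumes "prob_space \<rho>" "sets \<rho> = sets borel" "B \<in> sets borel"
    and "g \<in> borel_measurable borel" "\<And>x. \<bar>g x\<bar> \<le> c"
  shows "(\<integral>x. g x \<partial>split_measure \<rho> h B) = (\<integral>x. (\<Sum>s\<in>UNIV. g (split_shift h B s x)) / 2 \<partial>\<rho>)"
proof -
  note T = split_shift_measurable_pair[OF assms(2,3), of h]
  have "(\<integral>x. g x \<partial>split_measure \<rho> h B) = (\<integral>z. g (split_shift h B (snd z) (fst z)) \<partial>(\<rho> \<Otimes>\<^sub>M coin))"
    unfolding split_measure_def by (rule integral_distr[OF T assms(4)])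
  also have "\<dots> = (\<integral>x. \<integral>s. g (split_shift h B s x) \<partial>coin \<partial>\<rho>)"
    using integral_pair_prob_bounded[OF assms(1) prob_space_coin, of "\<lambda>z. g (split_shift h B (snd z) (fst z))" c]
      measurable_compose[OF T assms(4)] assms(5)
    by (simp add: comp_def)
  also have "\<dots> = (\<integral>x. (\<Sum>s\<in>UNIV. g (split_shift h B s x)) / 2 \<partial>\<rho>)"
    by (simp add: integral_coin)
  finally show ?thesis .
qed

lemma integral_pair_split_measure:
  fixes F :: "real \<Rightarrow> real \<Rightarrow> real"
  assumes \<rho>: "prob_space \<rho>" "sets \<rho> = sets borel" and B [measurable]: "B \<in> sets borel"
    and F [measurable]: "(\<lambda>(u, v). F u v) \<in> borel_measurable (borel \<Otimes>\<^sub>M borel)"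
    and F_bounded: "\<And>u v. \<bar>F u v\<bar> \<le> c"
  shows "(\<integral>z. F (fst z) (snd z) \<partial>(split_measure \<rho> h B \<Otimes>\<^sub>M split_measure \<rho> h B)) =
    (\<integral>z. (\<Sum>s\<in>UNIV. \<Sum>t\<in>UNIV. F (split_shift h B s (fst z)) (split_shift h B t (snd z))) / 4 \<partial>(\<rho> \<Otimes>\<^sub>M \<rho>))"
proof -
  let ?S = "split_measure \<rho> h B"
  let ?sh = "split_shift h B"
  interpret \<rho>: prob_space \<rho> by fact
  have S: "prob_space ?S" by (rule prob_space_split_measure[OF \<rho> B])
  note [measurable_cong] = \<rho>(2) sets_pair_measure_cong[OF \<rho>(2) \<rho>(2)]
    sets_pair_measure_cong[OF sets_split_measure sets_split_measure, of \<rho> h B \<rho> h B]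
  define P where "P u y = (\<Sum>t\<in>UNIV. F u (?sh t y)) / 2" for u y
  define G where "G u = (\<integral>y. P u y \<partial>\<rho>)" for u
  have P_bounded: "\<bar>P u y\<bar> \<le> c" for u y
    using F_bounded[of u "?sh True y"] F_bounded[of u "?sh False y"]
    by (simp add: P_def UNIV_bool abs_le_iff)
  have P_meas [measurable]: "(\<lambda>(u, y). P u y) \<in> borel_measurable (borel \<Otimes>\<^sub>M borel)"
    unfolding P_def by measurable
  have P_int: "integrable \<rho> (P u)" for u
    using P_bounded by (intro \<rho>.integrable_bounded) measurable
  have G_meas [measurable]: "G \<in> borel_measurable borel"
  proof -
    have "(\<lambda>(u, y). P u y) \<in> borel_measurable (borel \<Otimes>\<^sub>M \<rho>)"
      by measurable
    then show ?thesis
      unfolding G_def[abs_def] by (rule \<rho>.borel_measurable_lebesgue_integral)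
  qed
  have G_bounded: "\<bar>G u\<bar> \<le> c" for u
    unfolding G_def using P_bounded by (intro \<rho>.abs_integral_le) measurable
  have "(\<integral>z. F (fst z) (snd z) \<partial>(?S \<Otimes>\<^sub>M ?S)) = (\<integral>u. \<integral>v. F u v \<partial>?S \<partial>?S)"
  proof -
    have "(\<lambda>z. F (fst z) (snd z)) \<in> borel_measurable (?S \<Otimes>\<^sub>M ?S)"
      by measurable
    then show ?thesis
      using integral_pair_prob_bounded[OF S S, of "\<lambda>z. F (fst z) (snd z)" c] F_bounded by simp
  qed
  also have "\<dots> = (\<integral>u. G u \<partial>?S)"
    unfolding G_def P_def using F_bounded by (intro Bochner_Integration.integral_cong integral_split_measure[OF \<rho> B]) auto
  also have "\<dots> = (\<integral>x. (\<Sum>s\<in>UNIV. G (?sh s x)) / 2 \<partial>\<rho>)"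
    using G_bounded by (rule integral_split_measure[OF \<rho> B G_meas])
  also have "\<dots> = (\<integral>x. \<integral>y. (\<Sum>s\<in>UNIV. P (?sh s x) y) / 2 \<partial>\<rho> \<partial>\<rho>)"
    by (simp add: G_def integral_sum P_int)
  also have "\<dots> = (\<integral>x. \<integral>y. (\<Sum>s\<in>UNIV. \<Sum>t\<in>UNIV. F (?sh s x) (?sh t y)) / 4 \<partial>\<rho> \<partial>\<rho>)"
    by (simp add: P_def sum_divide_distrib)
  also have "\<dots> = (\<integral>z. (\<Sum>s\<in>UNIV. \<Sum>t\<in>UNIV. F (?sh s (fst z)) (?sh t (snd z))) / 4 \<partial>(\<rho> \<Otimes>\<^sub>M \<rho>))"
  proof -
    let ?avg = "\<lambda>z. (\<Sum>s\<in>UNIV. \<Sum>t\<in>UNIV. F (?sh s (fst z)) (?sh t (snd z))) / 4"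
    have "?avg \<in> borel_measurable (\<rho> \<Otimes>\<^sub>M \<rho>)"
      by measurable
    moreover have "\<bar>?avg z\<bar> \<le> c" for z
      using F_bounded[of "?sh False (fst z)" "?sh False (snd z)"]
        F_bounded[of "?sh False (fst z)" "?sh True (snd z)"]
        F_bounded[of "?sh True (fst z)" "?sh False (snd z)"]
        F_bounded[of "?sh True (fst z)" "?sh True (snd z)"]
      by (simp add: UNIV_bool abs_le_iff)
    ultimately show ?thesis
      using integral_pair_prob_bounded[OF \<rho>(1) \<rho>(1), of ?avg c] by simp
  qed
  finally show ?thesis .
qed

lemma wasserstein_split_measure_le:
  assumes "prob_space \<rho>" "sets \<rho> = sets borel" "B \<in> sets borel" "0 < lam"
  shows "wasserstein lam \<rho> (split_measure \<rho> h B) \<le> \<bar>h\<bar>"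
proof -
  let ?\<Omega> = "\<rho> \<Otimes>\<^sub>M coin"
  let ?I = "INF \<pi>\<in>couplings \<rho> (split_measure \<rho> h B). \<integral>\<^sup>+ z. ennreal (\<bar>fst z - snd z\<bar> powr lam) \<partial>\<pi>"
  define G where "G z = (fst z, split_shift h B (snd z) (fst z))" for z
  define \<pi> where "\<pi> = distr ?\<Omega> (borel \<Otimes>\<^sub>M borel) G"
  have \<Omega>: "prob_space ?\<Omega>"
    using assms(1) by (rule prob_space_pair) simp
  have "fst \<in> ?\<Omega> \<rightarrow>\<^sub>M borel"
    using measurable_fst[of \<rho> coin] assms(2) by (simp cong: measurable_cong_sets)
  then have G: "G \<in> ?\<Omega> \<rightarrow>\<^sub>M borel \<Otimes>\<^sub>M borel"
    unfolding G_def using split_shift_measurable_pair[OF assms(2,3)] by (rule measurable_Pair)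
  have "distr ?\<Omega> borel fst = distr ?\<Omega> \<rho> fst"
    using assms(2) by (intro distr_cong) auto
  also have "\<dots> = \<rho>"
    by (rule prob_space.distr_pair_fst[OF prob_space_coin])
  finally have "distr \<pi> borel fst = \<rho>"
    unfolding \<pi>_def using distr_distr[OF measurable_fst G] by (simp add: comp_def G_def)
  moreover have "distr \<pi> borel snd = split_measure \<rho> h B"
    unfolding \<pi>_def split_measure_def using distr_distr[OF measurable_snd G] by (simp add: comp_def G_def)
  moreover have "prob_space \<pi>"
    unfolding \<pi>_def using \<Omega> G by (rule prob_space.prob_space_distr)
  ultimately have coupling: "\<pi> \<in> couplings \<rho> (split_measure \<rho> h B)"
    unfolding couplings_def \<pi>_def by simp
  have "?I \<le> (\<integral>\<^sup>+ z. ennreal (\<bar>fst z - snd z\<bar> powr lam) \<partial>\<pi>)"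
    using coupling by (rule INF_lower)
  also have "\<dots> = (\<integral>\<^sup>+ z. ennreal (\<bar>fst (G z) - snd (G z)\<bar> powr lam) \<partial>?\<Omega>)"
    unfolding \<pi>_def by (rule nn_integral_distr[OF G]) measurable
  also have "\<dots> \<le> (\<integral>\<^sup>+ z. ennreal (\<bar>h\<bar> powr lam) \<partial>?\<Omega>)"
    using abs_split_shift_diff_le assms(4)
    by (intro nn_integral_mono ennreal_leI powr_mono2) (auto simp: G_def abs_minus_commute)
  also have "\<dots> = ennreal (\<bar>h\<bar> powr lam)"
    using prob_space.emeasure_space_1[OF \<Omega>] by simp
  finally have "enn2real ?I \<le> \<bar>h\<bar> powr lam"
    by (intro enn2real_leI) simp_all
  then have "wasserstein lam \<rho> (split_measure \<rho> h B) \<le> (\<bar>h\<bar> powr lam) powr (1 / lam)"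
    unfolding wasserstein_def using assms(4) by (intro powr_mono2) auto
  also have "\<dots> = \<bar>h\<bar>"
    using assms(4) by (simp add: powr_powr)
  finally show ?thesis .
qed

definition split_average :: "(real \<Rightarrow> real) \<Rightarrow> real \<Rightarrow> real set \<Rightarrow> real \<Rightarrow> real \<Rightarrow> real" where
  "split_average f h B x y = (\<Sum>s\<in>UNIV. \<Sum>t\<in>UNIV. f (split_shift h B s x - split_shift h B t y)) / 4"

lemma abs_split_average_le:
  assumes "\<And>d. \<bar>f d\<bar> \<le> c"
  shows "\<bar>split_average f h B x y\<bar> \<le> c"
proof -
  have "\<bar>\<Sum>s\<in>UNIV. \<Sum>t\<in>UNIV. f (split_shift h B s x - split_shift h B t y)\<bar> \<le> (\<Sum>s\<in>(UNIV :: bool set). \<Sum>t\<in>(UNIV :: bool set). c)"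
    by (intro order.trans[OF sum_abs] sum_mono order.trans[OF sum_abs] assms)
  then show ?thesis
    by (simp add: split_average_def UNIV_bool)
qed

lemma energy_split_measure_eq:
  assumes \<rho>: "prob_space \<rho>" "sets \<rho> = sets borel" and B: "B \<in> sets borel"
    and supp: "AE x in \<rho>. x \<in> {a..b}" and "b - a + 2 * \<bar>h\<bar> \<le> K" and pq: "0 < p" "0 < q"
  shows "energy p q (split_measure \<rho> h B) =
    ereal (1/2 * (\<integral>z. split_average (Vclip p q K) h B (fst z) (snd z) \<partial>(\<rho> \<Otimes>\<^sub>M \<rho>)))"
proof -
  let ?S = "split_measure \<rho> h B"
  have "energy p q ?S = ereal (1/2 * (\<integral>z. Vclip p q K (fst z - snd z) \<partial>(?S \<Otimes>\<^sub>M ?S)))"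
    using AE_split_measure_interval[OF \<rho> B supp, of h] assms(5)
    by (intro energy_eq_Vclip_integral[OF prob_space_split_measure[OF \<rho> B] sets_split_measure _ _ pq])
      auto
  also have "(\<integral>z. Vclip p q K (fst z - snd z) \<partial>(?S \<Otimes>\<^sub>M ?S)) =
      (\<integral>z. split_average (Vclip p q K) h B (fst z) (snd z) \<partial>(\<rho> \<Otimes>\<^sub>M \<rho>))"
    unfolding split_average_def using abs_Vclip_le[OF pq]
    by (intro integral_pair_split_measure[OF \<rho> B]) auto
  finally show ?thesis .
qed

context power_potential
begin

lemma split_average_Vpot_le:
  assumes "0 < h" and near: "x \<in> B \<or> y \<in> B \<Longrightarrow> \<bar>x - y\<bar> + 2 * h < r"
  shows "split_average (Vpot p q) h B x y \<le> Vpot p q (x - y)"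
    and "x \<in> B \<Longrightarrow> split_average (Vpot p q) h B x y < Vpot p q (x - y)"
proof -
  let ?d = "x - y"
  have strict: "split_average (Vpot p q) h B x y < Vpot p q ?d" if "x \<in> B \<or> y \<in> B"
  proof (cases "x \<in> B \<and> y \<in> B")
    case True
    then have "split_average (Vpot p q) h B x y = (Vpot p q (?d + 2 * h) + Vpot p q (?d - 2 * h) + 2 * Vpot p q ?d) / 4"
      by (simp add: split_average_def split_shift_def UNIV_bool algebra_simps)
    moreover have "Vpot p q (?d + 2 * h) + Vpot p q (?d - 2 * h) < 2 * Vpot p q ?d"
      using near that \<open>0 < h\<close> by (intro Vpot_midpoint_strict) auto
    ultimately show ?thesis by simp
  next
    case False
    with that have "split_average (Vpot p q) h B x y = (Vpot p q (?d + h) + Vpot p q (?d - h)) / 2"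
      by (auto simp: split_average_def split_shift_def UNIV_bool algebra_simps)
    moreover have "Vpot p q (?d + h) + Vpot p q (?d - h) < 2 * Vpot p q ?d"
      using near that \<open>0 < h\<close> by (intro Vpot_midpoint_strict) auto
    ultimately show ?thesis by simp
  qed
  moreover have "split_average (Vpot p q) h B x y = Vpot p q ?d" if "x \<notin> B" "y \<notin> B"
    using that by (simp add: split_average_def split_shift_def UNIV_bool)
  ultimately show "split_average (Vpot p q) h B x y \<le> Vpot p q ?d"
    by fastforce
  show "x \<in> B \<Longrightarrow> split_average (Vpot p q) h B x y < Vpot p q ?d"
    using strict by blast
qed

lemma split_average_Vclip_le:
  assumes "0 < h" "x \<in> {a..b}" "y \<in> {a..b}" "b - a + 2 * h \<le> K"
    and near: "x \<in> B \<or> y \<in> B \<Longrightarrow> \<bar>x - y\<bar> + 2 * h < r"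
  shows "split_average (Vclip p q K) h B x y \<le> Vclip p q K (x - y)"
    and "x \<in> B \<Longrightarrow> split_average (Vclip p q K) h B x y < Vclip p q K (x - y)"
proof -
  have "split_average (Vclip p q K) h B x y = split_average (Vpot p q) h B x y"
    unfolding split_average_def
  proof (intro arg_cong[where f = "\<lambda>u. u / 4"] sum.cong refl Vclip_eq_Vpot)
    fix s t
    show "\<bar>split_shift h B s x - split_shift h B t y\<bar> \<le> K"
      using abs_split_shift_diff_le[of h B s x] abs_split_shift_diff_le[of h B t y] assms(1-4)
      by (auto simp: abs_le_iff)
  qed
  moreover have "Vclip p q K (x - y) = Vpot p q (x - y)"
    using assms(1-4) by (intro Vclip_eq_Vpot) auto
  ultimately show "split_average (Vclip p q K) h B x y \<le> Vclip p q K (x - y)"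
    and "x \<in> B \<Longrightarrow> split_average (Vclip p q K) h B x y < Vclip p q K (x - y)"
    using split_average_Vpot_le[OF \<open>0 < h\<close> near] by simp_all
qed

lemma energy_split_measure_less:
  assumes \<rho>: "prob_space \<rho>" "sets \<rho> = sets borel"
    and B: "B \<in> sets borel" "0 < emeasure \<rho> B" and "0 < h"
    and supp: "AE x in \<rho>. x \<in> {a..b}"
    and near: "\<And>x y. x \<in> {a..b} \<Longrightarrow> y \<in> {a..b} \<Longrightarrow> x \<in> B \<Longrightarrow> \<bar>x - y\<bar> + 2 * h < r"
  shows "energy p q (split_measure \<rho> h B) < energy p q \<rho>"
proof -
  interpret \<rho>: prob_space \<rho> by fact
  interpret pair_prob_space \<rho> \<rho> ..
  note [measurable] = B(1)
  note [measurable_cong] = sets_pair_measure_cong[OF \<rho>(2) \<rho>(2)]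
  have pq: "0 < p" "0 < q"
    using one_less_q q_less_p by auto
  define K where "K = b - a + 2 * h"
  let ?avg = "\<lambda>z. split_average (Vclip p q K) h B (fst z) (snd z)"
  let ?V = "\<lambda>z. Vclip p q K (fst z - snd z)"
  have pointwise: "?avg z \<le> ?V z \<and> (fst z \<in> B \<longrightarrow> ?avg z < ?V z)"
    if "fst z \<in> {a..b}" "snd z \<in> {a..b}" for z
    using split_average_Vclip_le[OF \<open>0 < h\<close> that, of K B] near[of "fst z" "snd z"] near[of "snd z" "fst z"]
      that by (auto simp: K_def abs_minus_commute)
  have "(\<integral>z. ?avg z \<partial>(\<rho> \<Otimes>\<^sub>M \<rho>)) < (\<integral>z. ?V z \<partial>(\<rho> \<Otimes>\<^sub>M \<rho>))"
  proof (rule P.integral_less_AE[where A = "B \<times> space \<rho>"])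
    have bound: "\<bar>Vclip p q K d\<bar> \<le> \<bar>K\<bar> powr p / p + \<bar>K\<bar> powr q / q" for d
      by (rule abs_Vclip_le[OF pq])
    show "integrable (\<rho> \<Otimes>\<^sub>M \<rho>) ?V"
      using bound by (intro P.integrable_bounded) measurable
    show "integrable (\<rho> \<Otimes>\<^sub>M \<rho>) ?avg"
      using abs_split_average_le[OF bound] unfolding split_average_def
      by (intro P.integrable_bounded) measurable
    have "B \<in> sets \<rho>"
      using \<rho>(2) B(1) by simp
    then show "emeasure (\<rho> \<Otimes>\<^sub>M \<rho>) (B \<times> space \<rho>) \<noteq> 0"
      using B(2) by (simp add: \<rho>.emeasure_pair_measure_Times \<rho>.emeasure_space_1)
    show "B \<times> space \<rho> \<in> sets (\<rho> \<Otimes>\<^sub>M \<rho>)"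
      using \<open>B \<in> sets \<rho>\<close> by simp
    show "AE z in \<rho> \<Otimes>\<^sub>M \<rho>. z \<in> B \<times> space \<rho> \<longrightarrow> ?avg z \<noteq> ?V z"
      using AE_pair_interval[OF \<rho> supp] by eventually_elim (use pointwise in fastforce)
    show "AE z in \<rho> \<Otimes>\<^sub>M \<rho>. ?avg z \<le> ?V z"
      using AE_pair_interval[OF \<rho> supp] by eventually_elim (use pointwise in blast)
  qed
  moreover have "energy p q (split_measure \<rho> h B) = ereal (1/2 * (\<integral>z. ?avg z \<partial>(\<rho> \<Otimes>\<^sub>M \<rho>)))"
    using \<open>0 < h\<close> by (intro energy_split_measure_eq[OF \<rho> B(1) supp _ pq]) (simp add: K_def)
  moreover have "energy p q \<rho> = ereal (1/2 * (\<integral>z. ?V z \<partial>(\<rho> \<Otimes>\<^sub>M \<rho>)))"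
    using \<open>0 < h\<close> by (intro energy_eq_Vclip_integral[OF \<rho> supp _ pq]) (simp add: K_def)
  ultimately show ?thesis
    by simp
qed

lemma exists_nearby_lower_energy:
  assumes \<rho>: "prob_space \<rho>" "sets \<rho> = sets borel" and supp: "AE x in \<rho>. x \<in> {a..b}"
    and x0: "x0 \<in> msupp \<rho>" "b - r < x0" "x0 < a + r" and "0 < \<eta>" "0 < lam"
  shows "\<exists>\<rho>'. \<rho>' \<in> P_lambda lam \<and> wasserstein lam \<rho> \<rho>' \<le> \<eta> \<and> energy p q \<rho>' < energy p q \<rho>"
proof -
  define \<delta> where "\<delta> = min (a + r - x0) (x0 - (b - r))"
  define h where "h = min (\<delta> / 3) \<eta>"
  define B where "B = ball x0 (\<delta> / 3)"
  have "0 < \<delta>" "0 < h"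
    using x0 \<open>0 < \<eta>\<close> by (auto simp: \<delta>_def h_def)
  have B: "B \<in> sets borel" "0 < emeasure \<rho> B"
    using x0(1) \<open>0 < \<delta>\<close> unfolding msupp_def B_def by simp_all
  have near: "\<bar>x - y\<bar> + 2 * h < r" if "x \<in> {a..b}" "y \<in> {a..b}" "x \<in> B" for x y
  proof -
    have "h \<le> \<delta> / 3"
      unfolding h_def by simp
    moreover have "\<delta> \<le> a + r - x0" "\<delta> \<le> x0 - (b - r)"
      unfolding \<delta>_def by simp_all
    moreover have "\<bar>x0 - x\<bar> < \<delta> / 3"
      using \<open>x \<in> B\<close> unfolding B_def by (simp add: dist_real_def)
    ultimately show ?thesis
      using that unfolding atLeastAtMost_iff by arith
  qed
  have "split_measure \<rho> h B \<in> P_lambda lam"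
    using AE_split_measure_interval[OF \<rho> B(1) supp, of h] \<open>0 < lam\<close>
    by (intro P_lambda_if_AE_interval prob_space_split_measure[OF \<rho> B(1)]) auto
  moreover have "wasserstein lam \<rho> (split_measure \<rho> h B) \<le> \<eta>"
    using wasserstein_split_measure_le[OF \<rho> B(1) \<open>0 < lam\<close>, of h] \<open>0 < h\<close>
    by (simp add: h_def)
  moreover have "energy p q (split_measure \<rho> h B) < energy p q \<rho>"
    using B supp near \<open>0 < h\<close> by (intro energy_split_measure_less[OF \<rho>]) auto
  ultimately show ?thesis
    by blast
qed

end

theorem lemma2:
  fixes p q lam :: real and \<rho> :: "real measure"
  assumes "p > q" "q \<ge> 2" "1 \<le> lam"
    and "r = ((q - 1) / (p - 1)) powr (1 / (p - q))"
    and "R = (p / q) powr (1 / (p - q))"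
    and "l = R - r"
    and "l < r"
    and "local_minimizer p q lam \<rho>"
    and "Inf (msupp \<rho>) = 0"
    and "msupp \<rho> \<subseteq> {0..R}"
  shows "msupp \<rho> \<inter> {l<..<r} = {}"
proof (rule ccontr)
  assume "msupp \<rho> \<inter> {l<..<r} \<noteq> {}"
  then obtain x0 where x0: "x0 \<in> msupp \<rho>" "l < x0" "x0 < r" by auto
  interpret power_potential p q r
    using assms(1,2,4) by unfold_locales auto
  obtain \<eta> where "\<rho> \<in> P_lambda lam" "0 < \<eta>" and minimal:
    "\<And>\<rho>'. \<rho>' \<in> P_lambda lam \<Longrightarrow> wasserstein lam \<rho> \<rho>' \<le> \<eta> \<Longrightarrow> energy p q \<rho> \<le> energy p q \<rho>'"
    using assms(8) unfolding local_minimizer_def by blast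
  then have \<rho>: "prob_space \<rho>" "sets \<rho> = sets borel"
    unfolding P_lambda_def by auto
  have supp: "AE x in \<rho>. x \<in> {0..R}"
    using AE_in_msupp[OF \<rho>(2)] by eventually_elim (use assms(10) in blast)
  have "R - r < x0" "x0 < 0 + r" "0 < lam"
    using x0 assms(3,6) by simp_all
  then obtain \<rho>' where \<rho>': "\<rho>' \<in> P_lambda lam" "wasserstein lam \<rho> \<rho>' \<le> \<eta>"
    "energy p q \<rho>' < energy p q \<rho>"
    using exists_nearby_lower_energy[OF \<rho> supp x0(1) _ _ \<open>0 < \<eta>\<close>] by blast
  with minimal[OF \<rho>'(1,2)] show False
    by simp
qed

end
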